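(* Let $X$ be a compact metric space and $(x_n)_{n\in\mathbb{N}}$ a dense sequence in $X$. Then there is a coloring $c:[\mathbb{N}]^2\to2$ such that for every infinite $c$-homogeneous set $h\subseteq\mathbb{N}$ the subsequence $(x_n)_{n\in h}$ converges. Consequently the family $\mathcal{C}(x_n)_n=\{y\subseteq\mathbb{N}:(x_n)_{n\in y}\text{ is convergent}\}$ has a Borel selector.
   Context: A set $h$ is $c$-homogeneous if $c$ is constant on $[h]^2$. A Borel selector for a tall family $\mathcal{C}\subseteq2^{\mathbb{N}}$ is a Borel $S:2^{\mathbb{N}}\to2^{\mathbb{N}}$ with $S(x)\subseteq x$, $S(x)\in\mathcal{C}$, and $S(x)$ infinite whenever $x$ is infinite (subsets of $\mathbb{N}$ identified with elements of $2^{\mathbb{N}}$). *)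

theory Defs
  imports "HOL-Analysis.Analysis"
begin

text \<open>A colouring of [N]^2 into 2 colours: the colour of the pair {i,j} with i<j is c i j.\<close>
definition homogeneous :: "(nat \<Rightarrow> nat \<Rightarrow> bool) \<Rightarrow> nat set \<Rightarrow> bool" where
  "homogeneous c h \<longleftrightarrow> (\<exists>b. \<forall>i\<in>h. \<forall>j\<in>h. i < j \<longrightarrow> c i j = b)"

text \<open>The subsequence (x n) for n in y, enumerated increasingly, is convergent
  (finite index sets are counted as convergent by convention).\<close>
definition subseq_convergent :: "(nat \<Rightarrow> 'a::topological_space) \<Rightarrow> nat set \<Rightarrow> bool" where
  "subseq_convergent x y \<longleftrightarrow> finite y \<or> convergent (\<lambda>k. x (enumerate y k))"

definition conv_family :: "(nat \<Rightarrow> 'a::topological_space) \<Rightarrow> nat set set" where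
  "conv_family x = {y. subseq_convergent x y}"

text \<open>Borel selector; elements of 2^N are characteristic functions nat \<Rightarrow> bool with the
  product (Cantor) topology, subsets of N identified via Collect.\<close>
definition borel_selector :: "nat set set \<Rightarrow> ((nat \<Rightarrow> bool) \<Rightarrow> (nat \<Rightarrow> bool)) \<Rightarrow> bool" where
  "borel_selector C S \<longleftrightarrow> S \<in> borel \<rightarrow>\<^sub>M borel \<and>
     (\<forall>p. Collect (S p) \<subseteq> Collect p \<and> Collect (S p) \<in> C \<and>
          (infinite (Collect p) \<longrightarrow> infinite (Collect (S p))))"

end

theory Submission
  imports Defs
begin

text \<open>Cover the compact space, for every m, by finitely many balls of radius
  1/(2(m+1)) and record for each point x k the index of a ball containing it: this gives
  every k an address in a finitely branching tree, and points whose m-th digits agree are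
  1/(m+1)-close. Colour the pair i < j by whether the address of i is lexicographically
  below that of j. Along a homogeneous set the addresses are lexicographically monotone,
  and since each digit takes only finitely many values, every digit is eventually
  constant; the subsequence is then Cauchy, hence convergent in the complete space X.

  For the selector, given p take the leftmost path of the address tree along which
  infinitely many elements of p lie (Koenig's lemma), and keep an element k of p if, for
  every smaller j in p, k follows this path down to a depth at which j has already left it
  or which exceeds j. Infinitely many elements survive and their addresses converge to the
  path. Each coordinate of the output is obtained from the coordinates of p by countably
  many Boolean operations, so the selector is Borel.\<close>

lemma compact_address_coding:
  fixes X :: "'a::metric_space set" and x :: "nat \<Rightarrow> 'a" and r :: "nat \<Rightarrow> real"
  assumes "compact X" and "range x \<subseteq> X" and "\<And>m. r m > 0"
  obtains \<alpha> :: "nat \<Rightarrow> nat \<Rightarrow> nat" and N :: "nat \<Rightarrow> nat"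
  where "\<And>k m. \<alpha> k m < N m"
    and "\<And>k k' m. \<alpha> k m = \<alpha> k' m \<Longrightarrow> dist (x k) (x k') < r m"
proof -
  have "\<exists>cs. X \<subseteq> (\<Union>c\<in>set cs. ball c (r m / 2))" for m
  proof -
    obtain K where "finite K" "X \<subseteq> (\<Union>c\<in>K. ball c (r m / 2))"
      using seq_compact_imp_totally_bounded[OF compact_imp_seq_compact[OF \<open>compact X\<close>]]
        \<open>r m > 0\<close> by (metis half_gt_zero)
    then show ?thesis by (metis finite_list)
  qed
  then obtain L where L: "\<And>m. X \<subseteq> (\<Union>c\<in>set (L m). ball c (r m / 2))" by metis
  define \<alpha> where "\<alpha> k m = (LEAST i. i < length (L m) \<and> x k \<in> ball (L m ! i) (r m / 2))" for k m
  have \<alpha>: "\<alpha> k m < length (L m) \<and> x k \<in> ball (L m ! \<alpha> k m) (r m / 2)" for k m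
  proof -
    have "x k \<in> X" using assms(2) by auto
    then have "\<exists>i. i < length (L m) \<and> x k \<in> ball (L m ! i) (r m / 2)"
      using L[of m] by (fastforce simp: in_set_conv_nth)
    then show ?thesis unfolding \<alpha>_def by (rule LeastI_ex)
  qed
  have "dist (x k) (x k') < r m" if "\<alpha> k m = \<alpha> k' m" for k k' m
  proof -
    have "dist (x k) (x k') \<le> dist (L m ! \<alpha> k m) (x k) + dist (L m ! \<alpha> k m) (x k')"
      by (rule dist_triangle3)
    also have "\<dots> < r m / 2 + r m / 2"
      using \<alpha>[of k m] \<alpha>[of k' m] that by (intro add_strict_mono) auto
    finally show ?thesis by simp
  qed
  with \<alpha> show thesis by (intro that[of \<alpha> "\<lambda>m. length (L m)"]) blast+
qed

lemma convergent_if_addresses_eventually_constant: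
  fixes X :: "'a::metric_space set" and x :: "nat \<Rightarrow> 'a"
  assumes "compact X" and "range x \<subseteq> X" and "r \<longlonglongrightarrow> 0"
    and close: "\<And>k k' m. \<alpha> k m = \<alpha> k' m \<Longrightarrow> dist (x k) (x k') < r m"
    and stable: "\<And>m. \<exists>c. \<forall>\<^sub>F i in sequentially. \<alpha> (e i) m = c"
  shows "convergent (\<lambda>i. x (e i))"
proof -
  have "Cauchy (\<lambda>i. x (e i))"
  proof (rule metric_CauchyI)
    fix \<epsilon> :: real assume "\<epsilon> > 0"
    then obtain m where "r m < \<epsilon>"
      using order_tendstoD(2)[OF \<open>r \<longlonglongrightarrow> 0\<close>] by (metis eventually_sequentially order_refl)
    obtain c i0 where "\<And>i. i \<ge> i0 \<Longrightarrow> \<alpha> (e i) m = c"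
      using stable[of m] by (auto simp: eventually_sequentially)
    then have "\<forall>a\<ge>i0. \<forall>b\<ge>i0. dist (x (e a)) (x (e b)) < \<epsilon>"
      using close \<open>r m < \<epsilon>\<close> by (metis order.strict_trans)
    then show "\<exists>M. \<forall>a\<ge>M. \<forall>b\<ge>M. dist (x (e a)) (x (e b)) < \<epsilon>" by blast
  qed
  moreover have "complete X" using \<open>compact X\<close> by (rule compact_imp_complete)
  ultimately show ?thesis
    using assms(2) by (auto simp: convergent_def elim!: completeE)
qed

lemma eventually_constant_if_eventually_antimono_nat:
  fixes v :: "nat \<Rightarrow> nat"
  assumes "\<forall>\<^sub>F i in sequentially. v (Suc i) \<le> v i"
  shows "\<exists>c. \<forall>\<^sub>F i in sequentially. v i = c"
proof -
  obtain i0 where antimono: "\<And>i. i \<ge> i0 \<Longrightarrow> v (Suc i) \<le> v i"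
    using assms by (auto simp: eventually_sequentially)
  define \<mu> where "\<mu> = (LEAST y. y \<in> v ` {i0..})"
  have "\<mu> \<in> v ` {i0..}" unfolding \<mu>_def by (rule LeastI[of _ "v i0"]) simp
  then obtain i1 where "i1 \<ge> i0" "v i1 = \<mu>" by auto
  have "v i = \<mu>" if "i \<ge> i1" for i
  proof (rule antisym)
    from that show "v i \<le> \<mu>"
      by (induction rule: dec_induct) (use \<open>v i1 = \<mu>\<close> \<open>i1 \<ge> i0\<close> antimono order_trans in auto)
    show "\<mu> \<le> v i" unfolding \<mu>_def by (rule Least_le) (use that \<open>i1 \<ge> i0\<close> in auto)
  qed
  then show ?thesis by (auto simp: eventually_sequentially)
qed

lemma eventually_constant_if_eventually_mono_bounded_nat:
  fixes v :: "nat \<Rightarrow> nat"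
  assumes "\<forall>\<^sub>F i in sequentially. v i \<le> v (Suc i)" and "\<And>i. v i < B"
  shows "\<exists>c. \<forall>\<^sub>F i in sequentially. v i = c"
proof -
  have "\<forall>\<^sub>F i in sequentially. B - v (Suc i) \<le> B - v i"
    using assms(1) by eventually_elim simp
  then obtain c where "\<forall>\<^sub>F i in sequentially. B - v i = c"
    using eventually_constant_if_eventually_antimono_nat[of "\<lambda>i. B - v i"] by blast
  then have "\<forall>\<^sub>F i in sequentially. v i = B - c"
    by eventually_elim (use assms(2) in \<open>metis diff_diff_cancel less_imp_le\<close>)
  then show ?thesis ..
qed

definition lex_less :: "(nat \<Rightarrow> nat) \<Rightarrow> (nat \<Rightarrow> nat) \<Rightarrow> bool" where
  "lex_less f g \<longleftrightarrow> (\<exists>m. (\<forall>k<m. f k = g k) \<and> f m < g m)"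

lemma lex_less_imp_le_after_common_prefix:
  assumes "lex_less f g" and "\<forall>k<m. f k = g k"
  shows "f m \<le> g m"
proof -
  obtain m' where m': "\<forall>k<m'. f k = g k" "f m' < g m'"
    using assms(1) unfolding lex_less_def by blast
  show ?thesis
    using m' assms(2) by (cases m' m rule: linorder_cases) auto
qed

lemma lex_monotone_bounded_digits_eventually_constant:
  fixes f :: "nat \<Rightarrow> nat \<Rightarrow> nat"
  assumes bounded: "\<And>i m. f i m < N m"
    and monotone: "\<And>i. lex_less (f i) (f (Suc i)) = b"
  shows "\<exists>c. \<forall>\<^sub>F i in sequentially. f i m = c"
proof -
  have "\<exists>g. \<forall>\<^sub>F i in sequentially. \<forall>k<m. f i k = g k" for m
  proof (induction m)
    case 0
    show ?case by simp
  next
    case (Suc m)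
    then obtain g where prefix: "\<forall>\<^sub>F i in sequentially. \<forall>k<m. f i k = g k" ..
    then have common_prefix: "\<forall>\<^sub>F i in sequentially. \<forall>k<m. f i k = f (Suc i) k"
      using eventually_sequentially_Suc[of "\<lambda>i. \<forall>k<m. f i k = g k"]
      by (auto elim: eventually_elim2)
    obtain c where digit: "\<forall>\<^sub>F i in sequentially. f i m = c"
    proof (cases b)
      case True
      from common_prefix have "\<forall>\<^sub>F i in sequentially. f i m \<le> f (Suc i) m"
        by eventually_elim (use monotone True lex_less_imp_le_after_common_prefix in blast)
      then show thesis
        using that eventually_constant_if_eventually_mono_bounded_nat[of "\<lambda>i. f i m"] bounded
        by blast
    next
      case False
      from common_prefix have "\<forall>\<^sub>F i in sequentially. f (Suc i) m \<le> f i m"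
        by eventually_elim (use monotone False in \<open>auto simp: lex_less_def not_less\<close>)
      then show thesis
        using that eventually_constant_if_eventually_antimono_nat[of "\<lambda>i. f i m"] by blast
    qed
    from prefix digit have "\<forall>\<^sub>F i in sequentially. \<forall>k<Suc m. f i k = (g(m := c)) k"
      by eventually_elim (auto simp: less_Suc_eq)
    then show ?case by blast
  qed
  then obtain g where "\<forall>\<^sub>F i in sequentially. \<forall>k<Suc m. f i k = g k" by blast
  then have "\<forall>\<^sub>F i in sequentially. f i m = g m" by eventually_elim simp
  then show ?thesis by blast
qed

lemma lex_homogeneous_addresses_eventually_constant:
  fixes \<alpha> :: "nat \<Rightarrow> nat \<Rightarrow> nat"
  assumes bounded: "\<And>k m. \<alpha> k m < N m" and "infinite h"
    and homogeneous: "homogeneous (\<lambda>i j. lex_less (\<alpha> i) (\<alpha> j)) h"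
  shows "\<exists>c. \<forall>\<^sub>F i in sequentially. \<alpha> (enumerate h i) m = c"
proof -
  obtain b where "\<forall>i\<in>h. \<forall>j\<in>h. i < j \<longrightarrow> lex_less (\<alpha> i) (\<alpha> j) = b"
    using homogeneous unfolding homogeneous_def by blast
  then have "lex_less (\<alpha> (enumerate h i)) (\<alpha> (enumerate h (Suc i))) = b" for i
    using enumerate_in_set enumerate_step \<open>infinite h\<close> by blast
  then show ?thesis
    using lex_monotone_bounded_digits_eventually_constant[of "\<lambda>i. \<alpha> (enumerate h i)" N b] bounded
    by blast
qed

instance bool :: second_countable_topology
proof
  show "\<exists>B::bool set set. countable B \<and> open = generate_topology B"
    by (intro exI[of _ "Pow UNIV"])
      (auto simp: open_discrete fun_eq_iff intro: generate_topology.Basis)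
qed

lemma sets_borel_bool: "sets (borel :: bool measure) = sets (count_space UNIV)"
  by (auto simp: sets_borel open_discrete intro: sigma_sets.Basic)

lemma measurable_coordinate_bool [measurable]:
  "(\<lambda>p::nat \<Rightarrow> bool. p k) \<in> borel \<rightarrow>\<^sub>M count_space UNIV"
  using measurable_product_coordinates[where i=k] measurable_cong_sets[OF refl sets_borel_bool]
  by blast

definition address_prefix :: "(nat \<Rightarrow> nat \<Rightarrow> nat) \<Rightarrow> nat \<Rightarrow> nat \<Rightarrow> nat list" where
  "address_prefix \<alpha> k m = map (\<alpha> k) [0..<m]"

definition leftmost_digit :: "(nat \<Rightarrow> nat \<Rightarrow> nat) \<Rightarrow> (nat \<Rightarrow> bool) \<Rightarrow> nat list \<Rightarrow> nat" where
  "leftmost_digit \<alpha> p \<sigma> =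
     (LEAST d. \<exists>\<^sub>\<infinity>k. p k \<and> address_prefix \<alpha> k (Suc (length \<sigma>)) = \<sigma> @ [d])"

primrec leftmost_branch :: "(nat \<Rightarrow> nat \<Rightarrow> nat) \<Rightarrow> (nat \<Rightarrow> bool) \<Rightarrow> nat \<Rightarrow> nat list" where
  "leftmost_branch \<alpha> p 0 = []"
| "leftmost_branch \<alpha> p (Suc m) =
     leftmost_branch \<alpha> p m @ [leftmost_digit \<alpha> p (leftmost_branch \<alpha> p m)]"

definition branch_selector :: "(nat \<Rightarrow> nat \<Rightarrow> nat) \<Rightarrow> (nat \<Rightarrow> bool) \<Rightarrow> nat \<Rightarrow> bool" where
  "branch_selector \<alpha> p k \<longleftrightarrow> p k \<and>
     (\<forall>j<k. p j \<longrightarrow> (\<exists>m. address_prefix \<alpha> k m = leftmost_branch \<alpha> p m \<and>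
                          (j < m \<or> address_prefix \<alpha> j m \<noteq> leftmost_branch \<alpha> p m)))"

lemma measurable_leftmost_branch [measurable]:
  "(\<lambda>p. leftmost_branch \<alpha> p m) \<in> borel \<rightarrow>\<^sub>M count_space UNIV"
proof (induction m)
  case 0
  show ?case by simp
next
  case (Suc m)
  have [measurable]: "(\<lambda>p. leftmost_digit \<alpha> p \<sigma>) \<in> borel \<rightarrow>\<^sub>M count_space UNIV" for \<sigma>
    unfolding leftmost_digit_def INFM_nat by measurable
  have "(\<lambda>p. (\<lambda>\<sigma> p. \<sigma> @ [leftmost_digit \<alpha> p \<sigma>]) (leftmost_branch \<alpha> p m) p)
          \<in> borel \<rightarrow>\<^sub>M count_space UNIV"
    by (rule measurable_compose_countable[OF _ Suc]) measurable
  then show ?case by simp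
qed

lemma branch_selector_borel: "branch_selector \<alpha> \<in> borel \<rightarrow>\<^sub>M borel"
proof (rule measurable_coordinatewise_then_product)
  fix k
  have "(\<lambda>p. branch_selector \<alpha> p k) \<in> borel \<rightarrow>\<^sub>M count_space UNIV"
    unfolding branch_selector_def by measurable
  then show "(\<lambda>p. branch_selector \<alpha> p k) \<in> borel_measurable borel"
    using measurable_cong_sets[OF refl sets_borel_bool] by blast
qed

lemma nth_address_prefix: "i < m \<Longrightarrow> address_prefix \<alpha> k m ! i = \<alpha> k i"
  by (simp add: address_prefix_def)

lemma length_leftmost_branch [simp]: "length (leftmost_branch \<alpha> p m) = m"
  by (induction m) auto

lemma take_leftmost_branch: "m \<le> m' \<Longrightarrow> take m (leftmost_branch \<alpha> p m') = leftmost_branch \<alpha> p m"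
  by (induction m') (auto simp: le_Suc_eq)

lemma address_prefix_eq_leftmost_branch_mono:
  assumes "address_prefix \<alpha> k m' = leftmost_branch \<alpha> p m'" and "m \<le> m'"
  shows "address_prefix \<alpha> k m = leftmost_branch \<alpha> p m"
  using arg_cong[OF assms(1), of "take m"] assms(2)
  by (simp add: take_leftmost_branch address_prefix_def take_map)

lemma infinite_followers_of_leftmost_branch:
  assumes bounded: "\<And>k m. \<alpha> k m < N m" and "infinite (Collect p)"
  shows "infinite {k. p k \<and> address_prefix \<alpha> k m = leftmost_branch \<alpha> p m}"
proof (induction m)
  case 0
  show ?case using \<open>infinite (Collect p)\<close> by (simp add: address_prefix_def)
next
  case (Suc m)
  define \<sigma> where "\<sigma> = leftmost_branch \<alpha> p m"
  define B where "B d = {k. p k \<and> address_prefix \<alpha> k (Suc m) = \<sigma> @ [d]}" for d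
  have "{k. p k \<and> address_prefix \<alpha> k m = \<sigma>} \<subseteq> (\<Union>d<N m. B d)"
    using bounded by (auto simp: B_def address_prefix_def)
  with Suc.IH have "\<exists>d. infinite (B d)"
    unfolding \<sigma>_def by (meson finite_UN finite_lessThan finite_subset)
  then have "\<exists>d. \<exists>\<^sub>\<infinity>k. p k \<and> address_prefix \<alpha> k (Suc (length \<sigma>)) = \<sigma> @ [d]"
    by (simp add: B_def \<sigma>_def frequently_cofinite)
  then have "\<exists>\<^sub>\<infinity>k. p k \<and> address_prefix \<alpha> k (Suc (length \<sigma>)) = \<sigma> @ [leftmost_digit \<alpha> p \<sigma>]"
    unfolding leftmost_digit_def by (rule LeastI_ex)
  then show ?case by (simp add: \<sigma>_def frequently_cofinite)
qed

lemma infinite_branch_selector: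
  assumes bounded: "\<And>k m. \<alpha> k m < N m" and "infinite (Collect p)"
  shows "infinite (Collect (branch_selector \<alpha> p))"
  unfolding infinite_nat_iff_unbounded
proof
  fix n
  define G where "G = {k. p k \<and> address_prefix \<alpha> k (Suc n) = leftmost_branch \<alpha> p (Suc n)}"
  have "infinite G"
    unfolding G_def using infinite_followers_of_leftmost_branch[OF assms] .
  then have "\<exists>k>n. k \<in> G" by (simp add: infinite_nat_iff_unbounded)
  define k where "k = (LEAST k. k > n \<and> k \<in> G)"
  have k: "k > n" "k \<in> G"
    using LeastI_ex[OF \<open>\<exists>k>n. k \<in> G\<close>] unfolding k_def by auto
  have "branch_selector \<alpha> p k"
    unfolding branch_selector_def
  proof (intro conjI allI impI)
    show "p k" using k by (simp add: G_def)
    fix j assume "j < k" "p j"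
    have "j \<le> n \<or> j \<notin> G"
      using not_less_Least[of j "\<lambda>k. k > n \<and> k \<in> G"] \<open>j < k\<close> unfolding k_def by auto
    then show "\<exists>m. address_prefix \<alpha> k m = leftmost_branch \<alpha> p m \<and>
                   (j < m \<or> address_prefix \<alpha> j m \<noteq> leftmost_branch \<alpha> p m)"
      using k \<open>p j\<close> by (intro exI[of _ "Suc n"]) (auto simp: G_def)
  qed
  then show "\<exists>k>n. k \<in> Collect (branch_selector \<alpha> p)" using k by auto
qed

lemma branch_selector_eventually_follows_branch:
  assumes "infinite (Collect (branch_selector \<alpha> p))"
  defines "e \<equiv> enumerate (Collect (branch_selector \<alpha> p))"
  shows "\<forall>\<^sub>F i in sequentially. address_prefix \<alpha> (e i) m = leftmost_branch \<alpha> p m"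
proof (induction m)
  case 0
  show ?case by (simp add: address_prefix_def)
next
  case (Suc m)
  then obtain i0 where i0: "\<And>i. i \<ge> i0 \<Longrightarrow> address_prefix \<alpha> (e i) m = leftmost_branch \<alpha> p m"
    by (auto simp: eventually_sequentially)
  have "address_prefix \<alpha> (e (Suc j)) (Suc m) = leftmost_branch \<alpha> p (Suc m)"
    if "j \<ge> i0 + m" for j
  proof -
    have "branch_selector \<alpha> p (e (Suc j))" "p (e j)"
      using enumerate_in_set[OF assms(1)] by (auto simp: e_def branch_selector_def)
    moreover have "e j < e (Suc j)" "j \<le> e j"
      using enumerate_step[OF assms(1)] le_enumerate[OF assms(1)] by (auto simp: e_def)
    ultimately obtain m' where m': "address_prefix \<alpha> (e (Suc j)) m' = leftmost_branch \<alpha> p m'"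
      and deeper: "e j < m' \<or> address_prefix \<alpha> (e j) m' \<noteq> leftmost_branch \<alpha> p m'"
      unfolding branch_selector_def by blast
    have "Suc m \<le> m'"
    proof (rule ccontr)
      assume "\<not> Suc m \<le> m'"
      then have "m' \<le> m" "m' \<le> e j" using that \<open>j \<le> e j\<close> by auto
      moreover have "address_prefix \<alpha> (e j) m = leftmost_branch \<alpha> p m"
        using that by (intro i0) simp
      ultimately show False
        using deeper address_prefix_eq_leftmost_branch_mono[of \<alpha> "e j" m p m'] by linarith
    qed
    then show ?thesis using address_prefix_eq_leftmost_branch_mono[OF m'] by blast
  qed
  then have "\<forall>\<^sub>F j in sequentially.
              address_prefix \<alpha> (e (Suc j)) (Suc m) = leftmost_branch \<alpha> p (Suc m)"
    unfolding eventually_sequentially by blast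
  then show ?case by (rule eventually_sequentially_Suc[THEN iffD1])
qed

lemma branch_selector_digits_eventually_constant:
  assumes "infinite (Collect (branch_selector \<alpha> p))"
  shows "\<exists>c. \<forall>\<^sub>F i in sequentially. \<alpha> (enumerate (Collect (branch_selector \<alpha> p)) i) m = c"
proof -
  have "\<forall>\<^sub>F i in sequentially. \<alpha> (enumerate (Collect (branch_selector \<alpha> p)) i) m
                                = leftmost_branch \<alpha> p (Suc m) ! m"
    using branch_selector_eventually_follows_branch[OF assms, of "Suc m"]
    by eventually_elim (metis nth_address_prefix lessI)
  then show ?thesis by blast
qed

lemma branch_selector_is_borel_selector:
  fixes \<alpha> :: "nat \<Rightarrow> nat \<Rightarrow> nat" and x :: "nat \<Rightarrow> 'a::topological_space"
  assumes bounded: "\<And>k m. \<alpha> k m < N m"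
    and convergent: "\<And>e. (\<And>m. \<exists>c. \<forall>\<^sub>F i in sequentially. \<alpha> (e i) m = c)
                          \<Longrightarrow> convergent (\<lambda>i. x (e i))"
  shows "borel_selector (conv_family x) (branch_selector \<alpha>)"
  unfolding borel_selector_def
proof (intro conjI allI impI)
  fix p
  show "Collect (branch_selector \<alpha> p) \<subseteq> Collect p"
    by (auto simp: branch_selector_def)
  show "Collect (branch_selector \<alpha> p) \<in> conv_family x"
    using convergent[OF branch_selector_digits_eventually_constant[of \<alpha> p]]
    by (auto simp: conv_family_def subseq_convergent_def)
  show "infinite (Collect (branch_selector \<alpha> p))" if "infinite (Collect p)"
    using infinite_branch_selector[OF bounded that] .
qed (rule branch_selector_borel)

theorem mainTheorem17:
  fixes X :: "'a::metric_space set" and x :: "nat \<Rightarrow> 'a"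
  assumes "compact X" and "range x \<subseteq> X" and "X \<subseteq> closure (range x)"
  shows "(\<exists>c :: nat \<Rightarrow> nat \<Rightarrow> bool. \<forall>h. infinite h \<and> homogeneous c h \<longrightarrow>
            convergent (\<lambda>k. x (enumerate h k)))
         \<and> (\<exists>S. borel_selector (conv_family x) S)"
proof -
  obtain \<alpha> :: "nat \<Rightarrow> nat \<Rightarrow> nat" and N where bounded: "\<And>k m. \<alpha> k m < N m"
    and close: "\<And>k k' m. \<alpha> k m = \<alpha> k' m \<Longrightarrow> dist (x k) (x k') < inverse (real (Suc m))"
    by (rule compact_address_coding[OF assms(1,2), of "\<lambda>m. inverse (real (Suc m))"]) auto
  have convergent: "convergent (\<lambda>i. x (e i))"
    if "\<And>m. \<exists>c. \<forall>\<^sub>F i in sequentially. \<alpha> (e i) m = c" for e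
    using convergent_if_addresses_eventually_constant[where \<alpha>=\<alpha> and e=e, OF assms(1,2)
        LIMSEQ_inverse_real_of_nat close that] .
  have "convergent (\<lambda>k. x (enumerate h k))"
    if "infinite h" and "homogeneous (\<lambda>i j. lex_less (\<alpha> i) (\<alpha> j)) h" for h
    by (intro convergent lex_homogeneous_addresses_eventually_constant[of \<alpha> N h] bounded that)
  moreover have "borel_selector (conv_family x) (branch_selector \<alpha>)"
    using branch_selector_is_borel_selector[OF bounded convergent] .
  ultimately show ?thesis by blast
qed

end
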